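(* Let $A\in\mathbb{C}^{2n\times 2n}$ be a normal per-Hermitian matrix all of whose eigenvalues have nonzero imaginary parts. Then there exist a unitary perplectic matrix $U\in\mathbb{C}^{2n\times 2n}$ and a diagonal matrix $D\in\mathbb{C}^{n\times n}$ such that $$A=U\begin{bmatrix} D & 0\\ 0 & F_nD^HF_n\end{bmatrix}U^H .$$
   Context: For $m\ge1$, $F_m\in\mathbb{R}^{m\times m}$ denotes the flip (exchange) matrix with ones on the antidiagonal and zeros elsewhere. A matrix $A\in\mathbb{C}^{2n\times 2n}$ is per-Hermitian if $(F_{2n}A)^H=F_{2n}A$ and perskew-Hermitian if $(F_{2n}A)^H=-F_{2n}A$. A matrix $Z\in\mathbb{C}^{2n\times 2n}$ is perplectic if $Z^HF_{2n}Z=F_{2n}$; "unitary perplectic" means both unitary and perplectic. *)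

theory Defs
  imports "Jordan_Normal_Form.Schur_Decomposition"
begin

definition flip_mat :: "nat \<Rightarrow> complex mat" where
  "flip_mat m = mat m m (\<lambda>(i,j). if i + j + 1 = m then 1 else 0)"

definition per_hermitian :: "nat \<Rightarrow> complex mat \<Rightarrow> bool" where
  "per_hermitian n A \<longleftrightarrow> mat_adjoint (flip_mat (2*n) * A) = flip_mat (2*n) * A"

definition perplectic :: "nat \<Rightarrow> complex mat \<Rightarrow> bool" where
  "perplectic n Z \<longleftrightarrow> mat_adjoint Z * flip_mat (2*n) * Z = flip_mat (2*n)"

definition unitary_mat :: "complex mat \<Rightarrow> bool" where
  "unitary_mat U \<longleftrightarrow> U \<in> carrier_mat (dim_row U) (dim_row U) \<and>
     mat_adjoint U * U = 1\<^sub>m (dim_row U)"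

definition normal_mat :: "complex mat \<Rightarrow> bool" where
  "normal_mat A \<longleftrightarrow> A * mat_adjoint A = mat_adjoint A * A"

end

theory Submission
  imports Defs
begin

text \<open>Being normal, A is unitarily diagonalizable, A = U L U^H. Per-Hermiticity means
  A F = F A^H for the flip matrix F, so M = U^H F U is a Hermitian involution with L M = M L^H;
  hence an entry M_ij can only be nonzero when L_ii is the conjugate of L_jj, i.e. M only connects
  eigenvalues from opposite half-planes. Since M is unitary, this forces exactly n of the 2n
  eigenvalues into the upper half-plane. If e_s1, ..., e_sn are the corresponding unit vectors,
  then e_s1, ..., e_sn, M e_sn, ..., M e_s1 are the columns of a unitary W with M W = W F, and
  V = U W is unitary, perplectic and brings A to the required block diagonal form.\<close>

lemma index_mult_mat_sum:
  assumes "(A :: 'a :: comm_semiring_0 mat) \<in> carrier_mat n k" and "B \<in> carrier_mat k m"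
    and "i < n" and "j < m"
  shows "(A * B) $$ (i, j) = (\<Sum>l<k. A $$ (i, l) * B $$ (l, j))"
  using assms by (auto simp: scalar_prod_def intro!: sum.cong)

lemma index_diagonal_mult:
  assumes "(L :: 'a :: comm_semiring_1 mat) \<in> carrier_mat m m" and "diagonal_mat L"
    and "X \<in> carrier_mat m c" and "i < m" and "k < c"
  shows "(L * X) $$ (i, k) = L $$ (i, i) * X $$ (i, k)"
  using assms unfolding index_mult_mat_sum[OF assms(1,3-5)] diagonal_mat_def
  by (subst sum.remove[of _ i]) (auto intro!: sum.neutral)

lemma index_mult_diagonal:
  assumes "(L :: 'a :: comm_semiring_1 mat) \<in> carrier_mat m m" and "diagonal_mat L"
    and "X \<in> carrier_mat r m" and "i < r" and "k < m"
  shows "(X * L) $$ (i, k) = X $$ (i, k) * L $$ (k, k)"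
  using assms unfolding index_mult_mat_sum[OF assms(3,1,4,5)] diagonal_mat_def
  by (subst sum.remove[of _ k]) (auto intro!: sum.neutral)

lemma mult_left_inverse_cancel:
  "(A :: 'a :: semiring_1 mat) \<in> carrier_mat n n \<Longrightarrow> B \<in> carrier_mat n n \<Longrightarrow> C \<in> carrier_mat n n \<Longrightarrow>
    A * B = 1\<^sub>m n \<Longrightarrow> A * (B * C) = C"
  by (subst assoc_mult_mat[symmetric, of _ n n _ n _ n]) auto

lemma dim_mat_adjoint [simp]:
  "dim_row (mat_adjoint A) = dim_col A" "dim_col (mat_adjoint A) = dim_row A"
  unfolding mat_adjoint_def by auto

lemma index_mat_adjoint [simp]:
  "i < dim_col A \<Longrightarrow> j < dim_row A \<Longrightarrow> mat_adjoint A $$ (i, j) = cnj (A $$ (j, i))"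
  unfolding mat_adjoint_def by (auto simp: mat_of_rows_def)

lemma mat_adjoint_carrier [simp]: "A \<in> carrier_mat n m \<Longrightarrow> mat_adjoint A \<in> carrier_mat m n"
  unfolding carrier_mat_def by simp

lemma mat_adjoint_mat_adjoint [simp]: "mat_adjoint (mat_adjoint (A :: complex mat)) = A"
  by (rule eq_matI) auto

lemma mat_adjoint_one [simp]: "mat_adjoint (1\<^sub>m n :: complex mat) = 1\<^sub>m n"
  by (rule eq_matI) auto

lemma mat_adjoint_mult:
  assumes "(A :: complex mat) \<in> carrier_mat n k" and "B \<in> carrier_mat k m"
  shows "mat_adjoint (A * B) = mat_adjoint B * mat_adjoint A"
proof (rule eq_matI)
  fix i j assume "i < dim_row (mat_adjoint B * mat_adjoint A)" "j < dim_col (mat_adjoint B * mat_adjoint A)"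
  with assms have i: "i < m" and j: "j < n" by auto
  have "mat_adjoint (A * B) $$ (i, j) = (\<Sum>l<k. cnj (B $$ (l, i)) * cnj (A $$ (j, l)))"
    using assms i j by (simp add: index_mult_mat_sum[OF assms j i] mult.commute)
  also have "\<dots> = (mat_adjoint B * mat_adjoint A) $$ (i, j)"
    using assms i j by (subst index_mult_mat_sum[of _ m k _ n]) auto
  finally show "mat_adjoint (A * B) $$ (i, j) = (mat_adjoint B * mat_adjoint A) $$ (i, j)" .
qed (use assms in auto)

lemma mat_adjoint_four_block_mat:
  assumes "(A :: complex mat) \<in> carrier_mat n1 m1" "B \<in> carrier_mat n1 m2"
    "C \<in> carrier_mat n2 m1" "D \<in> carrier_mat n2 m2"
  shows "mat_adjoint (four_block_mat A B C D) =
    four_block_mat (mat_adjoint A) (mat_adjoint C) (mat_adjoint B) (mat_adjoint D)"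
  using assms by (intro eq_matI) auto

lemma diagonal_mat_adjoint: "diagonal_mat (L :: complex mat) \<Longrightarrow> diagonal_mat (mat_adjoint L)"
  unfolding diagonal_mat_def by auto

lemma unitary_right_inverse:
  assumes "(W :: complex mat) \<in> carrier_mat n n" and "mat_adjoint W * W = 1\<^sub>m n"
  shows "W * mat_adjoint W = 1\<^sub>m n"
  using assms by (intro mat_mult_left_right_inverse[of "mat_adjoint W" n]) auto

lemma index_mult_mat_adjoint_diag:
  assumes "(M :: complex mat) \<in> carrier_mat n m" and "i < n"
  shows "(M * mat_adjoint M) $$ (i, i) = of_real (\<Sum>k<m. (cmod (M $$ (i, k)))\<^sup>2)"
  using assms unfolding of_real_sum
  by (subst index_mult_mat_sum[of _ n m _ n])
    (auto simp del: of_real_power simp: complex_norm_square intro!: sum.cong)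

lemma index_mat_adjoint_mult_diag:
  assumes "(M :: complex mat) \<in> carrier_mat n m" and "j < m"
  shows "(mat_adjoint M * M) $$ (j, j) = of_real (\<Sum>k<n. (cmod (M $$ (k, j)))\<^sup>2)"
  using assms unfolding of_real_sum
  by (subst index_mult_mat_sum[of _ m n _ m])
    (auto simp del: of_real_power simp: complex_norm_square mult.commute intro!: sum.cong)

subsection \<open>Spectral theorem for normal matrices\<close>

lemma unitary_with_first_col:
  fixes v :: "complex vec"
  assumes v: "v \<in> carrier_vec n" and v0: "v \<noteq> 0\<^sub>v n"
  shows "\<exists>W c. W \<in> carrier_mat n n \<and> mat_adjoint W * W = 1\<^sub>m n \<and> col W 0 = c \<cdot>\<^sub>v v"
proof -
  have n: "n > 0" using v v0 by (cases n) auto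
  interpret cof_vec_space n "TYPE(complex)" .
  obtain vs where b: "set (v # vs) \<subseteq> carrier_vec n" "distinct (v # vs)"
    "\<not> lin_dep (set (v # vs))" "length (v # vs) = n"
    using basis_completion[OF v v0] by (metis list.collapse list.sel(1) list.size(3) n not_gr0)
  define ws where "ws = gram_schmidt n (v # vs)"
  have ws: "set ws \<subseteq> carrier_vec n" "corthogonal ws" "length ws = n"
    using gram_schmidt_result[OF b(1-3) refl] b(4) unfolding ws_def by auto
  have ws0: "ws ! 0 = v"
    using gram_schmidt_hd[OF v, of vs] ws(3) n unfolding ws_def by (cases "gram_schmidt n (v # vs)") auto
  have wsc: "j < n \<Longrightarrow> ws ! j \<in> carrier_vec n" for j using ws by auto
  \<comment> \<open>in the order on complex numbers used by the library, positive means positive real\<close>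
  define r where "r j = Re (ws ! j \<bullet>c ws ! j)" for j
  have r: "ws ! j \<bullet>c ws ! j = of_real (r j)" "r j > 0" if j: "j < n" for j
  proof -
    have "ws ! j \<bullet>c ws ! j > 0"
      using corthogonalD[OF ws(2), of j j] ws(3) j wsc[OF j] by (auto simp: order.strict_iff_order)
    then show "ws ! j \<bullet>c ws ! j = of_real (r j)" "r j > 0"
      unfolding r_def by (auto simp: less_complex_def complex_eq_iff)
  qed
  define s where "s j = complex_of_real (1 / sqrt (r j))" for j
  define W where "W = mat n n (\<lambda>(k, j). s j * (ws ! j $ k))"
  have W: "W \<in> carrier_mat n n" unfolding W_def by auto
  have "col W 0 = s 0 \<cdot>\<^sub>v v"
    using v n by (intro eq_vecI) (auto simp: W_def ws0)
  moreover have "mat_adjoint W * W = 1\<^sub>m n"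
  proof (rule eq_matI)
    fix i j assume "i < dim_row (1\<^sub>m n)" "j < dim_col (1\<^sub>m n)"
    hence i: "i < n" and j: "j < n" by auto
    have "(mat_adjoint W * W) $$ (i, j) = (\<Sum>k<n. cnj (s i) * s j * (ws ! j $ k * cnj (ws ! i $ k)))"
      using W i j by (subst index_mult_mat_sum[of _ n n _ n]) (auto simp: W_def intro!: sum.cong)
    also have "\<dots> = cnj (s i) * s j * (ws ! j \<bullet>c ws ! i)"
      using wsc[OF i] by (auto simp: scalar_prod_def sum_distrib_left intro!: sum.cong)
    also have "\<dots> = 1\<^sub>m n $$ (i, j)"
    proof (cases "i = j")
      case True
      have "(1 / sqrt (r i)) * (1 / sqrt (r i)) * r i = 1" using r(2)[OF i] by (simp add: field_simps)
      then have "cnj (s i) * s i * complex_of_real (r i) = 1"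
        unfolding s_def by (metis complex_cnj_complex_of_real of_real_1 of_real_mult)
      then show ?thesis using True i r(1)[OF i] by simp
    next
      case False
      then show ?thesis using corthogonalD[OF ws(2), of j i] ws(3) i j by auto
    qed
    finally show "(mat_adjoint W * W) $$ (i, j) = 1\<^sub>m n $$ (i, j)" .
  qed (use W in auto)
  ultimately show ?thesis using W by blast
qed

lemma similar_mat_wit_unitary:
  assumes A: "(A :: complex mat) \<in> carrier_mat n n" and W: "W \<in> carrier_mat n n"
    and WW: "mat_adjoint W * W = 1\<^sub>m n"
  shows "similar_mat_wit A (mat_adjoint W * A * W) W (mat_adjoint W)"
proof -
  have WW': "W * mat_adjoint W = 1\<^sub>m n" by (rule unitary_right_inverse[OF W WW])
  have "W * (mat_adjoint W * A * W) * mat_adjoint W = (W * mat_adjoint W) * A * (W * mat_adjoint W)"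
    using A W by (simp add: assoc_mult_mat[of _ n n _ n _ n] mult_carrier_mat[of _ n n])
  then show ?thesis using A W WW WW' by (intro similar_mat_witI) auto
qed

text \<open>A unitary change of basis whose first vector is an eigenvector clears the first column
  below the diagonal.\<close>

lemma unitary_deflation:
  assumes A: "(A :: complex mat) \<in> carrier_mat (Suc m) (Suc m)"
  shows "\<exists>W A1 A2 A3. mat_adjoint W * W = 1\<^sub>m (Suc m) \<and>
    A1 \<in> carrier_mat 1 1 \<and> A2 \<in> carrier_mat 1 m \<and> A3 \<in> carrier_mat m m \<and>
    similar_mat_wit A (four_block_mat A1 A2 (0\<^sub>m m 1) A3) W (mat_adjoint W)"
proof -
  obtain e es where "char_poly A = (\<Prod>a \<leftarrow> e # es. [:- a, 1:])"
    using char_poly_factorized[OF A] by (metis length_0_conv neq_Nil_conv nat.distinct(1))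
  then have "eigenvalue A e" unfolding eigenvalue_root_char_poly[OF A] by simp
  then obtain v where v: "v \<in> carrier_vec (Suc m)" "v \<noteq> 0\<^sub>v (Suc m)" and Av: "A *\<^sub>v v = e \<cdot>\<^sub>v v"
    using A unfolding eigenvalue_def eigenvector_def by auto
  obtain W c where W: "W \<in> carrier_mat (Suc m) (Suc m)" and WW: "mat_adjoint W * W = 1\<^sub>m (Suc m)"
    and Wc: "col W 0 = c \<cdot>\<^sub>v v"
    using unitary_with_first_col[OF v] by auto
  define A' where "A' = mat_adjoint W * A * W"
  have A': "A' \<in> carrier_mat (Suc m) (Suc m)" unfolding A'_def using W A by auto
  have col0: "A' $$ (i, 0) = 0" if i: "0 < i" "i < Suc m" for i
  proof -
    have "col (A * W) 0 = A *\<^sub>v (c \<cdot>\<^sub>v v)" using col_mult2[OF A W] Wc by simp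
    also have "\<dots> = e \<cdot>\<^sub>v col W 0"
      using A v Av by (simp add: Wc mult_mat_vec smult_smult_assoc mult.commute)
    finally have "col (A * W) 0 = e \<cdot>\<^sub>v col W 0" .
    then have "A' $$ (i, 0) = e * (mat_adjoint W * W) $$ (i, 0)"
      using A W i unfolding A'_def
      by (simp add: assoc_mult_mat[of _ "Suc m" "Suc m" _ "Suc m" _ "Suc m"]
          mult_carrier_mat[of _ "Suc m" "Suc m"] scalar_prod_smult_distrib[of _ "Suc m"])
    then show ?thesis using WW i by simp
  qed
  obtain A1 A2 A0 A3 where sb: "split_block A' 1 1 = (A1, A2, A0, A3)"
    by (cases "split_block A' 1 1") auto
  have A'b: "A' = four_block_mat A1 A2 A0 A3" and blocks: "A1 \<in> carrier_mat 1 1" "A2 \<in> carrier_mat 1 m"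
    "A0 \<in> carrier_mat m 1" "A3 \<in> carrier_mat m m"
    using split_block[OF sb] A' by auto
  have "A0 = 0\<^sub>m m 1"
  proof (rule eq_matI)
    fix i j assume "i < dim_row (0\<^sub>m m 1 :: complex mat)" "j < dim_col (0\<^sub>m m 1 :: complex mat)"
    then have i: "i < m" and j: "j = 0" by auto
    have "A0 $$ (i, j) = A' $$ (Suc i, 0)"
      using sb i j A' unfolding split_block_def Let_def by auto
    then show "A0 $$ (i, j) = 0\<^sub>m m 1 $$ (i, j)" using col0[of "Suc i"] i j by simp
  qed (use blocks in auto)
  then have "similar_mat_wit A (four_block_mat A1 A2 (0\<^sub>m m 1) A3) W (mat_adjoint W)"
    using similar_mat_wit_unitary[OF A W WW, folded A'_def] A'b by simp
  then show ?thesis using WW blocks by blast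
qed

lemma unitary_schur_decomposition:
  assumes "(A :: complex mat) \<in> carrier_mat n n"
  shows "\<exists>U T. similar_mat_wit A T U (mat_adjoint U) \<and> upper_triangular T"
  using assms
proof (induction n arbitrary: A)
  case 0
  have "similar_mat_wit A A (1\<^sub>m 0) (mat_adjoint (1\<^sub>m 0))" using similar_mat_wit_refl[OF 0] by simp
  moreover have "upper_triangular A" using 0 by (auto intro!: upper_triangularI)
  ultimately show ?case by blast
next
  case (Suc m A)
  obtain W A1 A2 A3 where WW: "mat_adjoint W * W = 1\<^sub>m (Suc m)"
    and blocks: "A1 \<in> carrier_mat 1 1" "A2 \<in> carrier_mat 1 m" "A3 \<in> carrier_mat m m"
    and simW: "similar_mat_wit A (four_block_mat A1 A2 (0\<^sub>m m 1) A3) W (mat_adjoint W)"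
    using unitary_deflation[OF Suc.prems] by blast
  obtain U3 T3 where sim3: "similar_mat_wit A3 T3 U3 (mat_adjoint U3)" and ut3: "upper_triangular T3"
    using Suc.IH[OF blocks(3)] by blast
  have U3: "U3 \<in> carrier_mat m m" and T3: "T3 \<in> carrier_mat m m" and U3U3: "U3 * mat_adjoint U3 = 1\<^sub>m m"
    using similar_mat_witD2[OF blocks(3) sim3] by auto
  have W: "W \<in> carrier_mat (Suc m) (Suc m)" using similar_mat_witD2[OF Suc.prems simW] by auto
  define P where "P = four_block_mat (1\<^sub>m 1) (0\<^sub>m 1 m) (0\<^sub>m m 1) U3"
  have P: "P \<in> carrier_mat (Suc m) (Suc m)" unfolding P_def using U3 by auto
  have adjP: "mat_adjoint P = four_block_mat (1\<^sub>m 1) (0\<^sub>m 1 m) (0\<^sub>m m 1) (mat_adjoint U3)"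
    unfolding P_def using U3 by (subst mat_adjoint_four_block_mat) auto
  have A2: "A2 = 1\<^sub>m 1 * (A2 * U3) * mat_adjoint U3"
    using blocks(2) U3 U3U3 by (simp add: assoc_mult_mat[of _ 1 m _ m _ m])
  have zero: "0\<^sub>m m 1 = U3 * 0\<^sub>m m 1 * 1\<^sub>m 1" using U3 by simp
  have "similar_mat_wit (four_block_mat A1 A2 (0\<^sub>m m 1) A3) (four_block_mat A1 (A2 * U3) (0\<^sub>m m 1) T3)
      P (mat_adjoint P)"
    unfolding adjP unfolding P_def
    using similar_mat_wit_four_block[OF similar_mat_wit_refl[OF blocks(1)] sim3 A2 zero blocks(1,3)
        zero_carrier_mat mult_carrier_mat[OF blocks(2) U3]] .
  from similar_mat_wit_trans[OF simW this]
  have "similar_mat_wit A (four_block_mat A1 (A2 * U3) (0\<^sub>m m 1) T3) (W * P) (mat_adjoint (W * P))"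
    unfolding mat_adjoint_mult[OF W P] .
  moreover have "upper_triangular (four_block_mat A1 (A2 * U3) (0\<^sub>m m 1) T3)"
    using blocks(1) T3 ut3 by (intro upper_triangular_four_block) (auto intro!: upper_triangularI)
  ultimately show ?case by blast
qed

lemma normal_upper_triangular_diagonal:
  assumes T: "(T :: complex mat) \<in> carrier_mat n n" and ut: "upper_triangular T"
    and nm: "normal_mat T"
  shows "diagonal_mat T"
proof -
  have lower: "T $$ (k, i) = 0" if "i < k" "k < n" for i k
    using ut T that unfolding upper_triangular_def by auto
  \<comment> \<open>the i-th diagonal entries of T T^H and T^H T say that row i and column i of T
    have the same norm\<close>
  have upper: "\<forall>j. i < j \<and> j < n \<longrightarrow> T $$ (i, j) = 0" if "i < n" for i
    using that
  proof (induction i rule: less_induct)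
    case (less i)
    define row_sq where "row_sq k = (cmod (T $$ (i, k)))\<^sup>2" for k
    define col_sq where "col_sq k = (cmod (T $$ (k, i)))\<^sup>2" for k
    have "sum row_sq {..<n} = sum col_sq {..<n}"
      using nm index_mult_mat_adjoint_diag[OF T less.prems] index_mat_adjoint_mult_diag[OF T less.prems]
      unfolding normal_mat_def row_sq_def col_sq_def by (metis of_real_eq_iff)
    moreover have "col_sq k = 0" if "k \<in> {..<n} - {i}" for k
      using that less.IH[of k] lower[of i k] less.prems unfolding col_sq_def by (cases "k < i") auto
    moreover have "row_sq i = col_sq i" unfolding row_sq_def col_sq_def ..
    ultimately have "sum row_sq ({..<n} - {i}) = 0"
      using less.prems by (simp add: sum.remove)
    then have "\<forall>k \<in> {..<n} - {i}. row_sq k = 0"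
      by (subst (asm) sum_nonneg_eq_0_iff) (auto simp: row_sq_def)
    then show ?case unfolding row_sq_def by auto
  qed
  show ?thesis unfolding diagonal_mat_def
    using T upper lower by (metis carrier_matD linorder_neqE_nat)
qed

theorem normal_unitarily_diagonalizable:
  assumes A: "(A :: complex mat) \<in> carrier_mat n n" and nm: "normal_mat A"
  shows "\<exists>U L. U \<in> carrier_mat n n \<and> mat_adjoint U * U = 1\<^sub>m n \<and>
    L \<in> carrier_mat n n \<and> diagonal_mat L \<and> A = U * L * mat_adjoint U"
proof -
  obtain U T where sim: "similar_mat_wit A T U (mat_adjoint U)" and ut: "upper_triangular T"
    using unitary_schur_decomposition[OF A] by blast
  have UU': "U * mat_adjoint U = 1\<^sub>m n" and U'U: "mat_adjoint U * U = 1\<^sub>m n"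
    and AT: "A = U * T * mat_adjoint U" and T: "T \<in> carrier_mat n n" and U: "U \<in> carrier_mat n n"
    using similar_mat_witD2[OF A sim] by blast+
  note simps = assoc_mult_mat[of _ n n _ n _ n] mult_carrier_mat[of _ n n]
    mult_left_inverse_cancel[of _ n] mat_adjoint_mult[of _ n n _ n]
  have TA: "T = mat_adjoint U * A * U"
    unfolding AT using U T U'U by (simp add: simps)
  have "T * mat_adjoint T = mat_adjoint U * (A * mat_adjoint A) * U"
    "mat_adjoint T * T = mat_adjoint U * (mat_adjoint A * A) * U"
    unfolding TA using U A UU' by (simp_all add: simps)
  then have "normal_mat T" using nm unfolding normal_mat_def by simp
  then show ?thesis
    using normal_upper_triangular_diagonal[OF T ut] U T U'U AT by blast
qed

lemma flip_mat_carrier [simp]: "flip_mat m \<in> carrier_mat m m"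
  unfolding flip_mat_def by auto

lemma dim_flip_mat [simp]: "dim_row (flip_mat m) = m" "dim_col (flip_mat m) = m"
  unfolding flip_mat_def by auto

lemma index_flip_mat: "i < m \<Longrightarrow> j < m \<Longrightarrow> flip_mat m $$ (i, j) = (if i = m - 1 - j then 1 else 0)"
  unfolding flip_mat_def by auto

lemma mat_adjoint_flip_mat [simp]: "mat_adjoint (flip_mat m) = flip_mat m"
  by (rule eq_matI) (auto simp: index_flip_mat)

lemma index_mult_flip_mat:
  assumes "X \<in> carrier_mat r m" and "i < r" and "k < m"
  shows "(X * flip_mat m) $$ (i, k) = X $$ (i, m - 1 - k)"
proof -
  have "(X * flip_mat m) $$ (i, k) = (\<Sum>l<m. X $$ (i, l) * flip_mat m $$ (l, k))"
    using assms by (intro index_mult_mat_sum) auto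
  also have "\<dots> = (\<Sum>l<m. if l = m - 1 - k then X $$ (i, l) else 0)"
    using assms by (intro sum.cong) (auto simp: index_flip_mat)
  finally show ?thesis using assms by simp
qed

lemma index_flip_mat_mult:
  assumes "X \<in> carrier_mat m c" and "i < m" and "k < c"
  shows "(flip_mat m * X) $$ (i, k) = X $$ (m - 1 - i, k)"
proof -
  have "(flip_mat m * X) $$ (i, k) = (\<Sum>l<m. flip_mat m $$ (i, l) * X $$ (l, k))"
    using assms by (intro index_mult_mat_sum) auto
  also have "\<dots> = (\<Sum>l<m. if l = m - 1 - i then X $$ (l, k) else 0)"
    using assms by (intro sum.cong) (auto simp: index_flip_mat)
  finally show ?thesis using assms by simp
qed

lemma flip_mat_mult_flip_mat [simp]: "flip_mat m * flip_mat m = (1\<^sub>m m :: complex mat)"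
  by (rule eq_matI) (auto simp del: index_mult_mat(1) simp: index_flip_mat_mult[of _ m m] index_flip_mat)

lemma index_flip_adjoint_flip:
  assumes D: "(D :: complex mat) \<in> carrier_mat n n" and "p < n" and "q < n"
  shows "(flip_mat n * mat_adjoint D * flip_mat n) $$ (p, q) = cnj (D $$ (n - 1 - q, n - 1 - p))"
proof -
  have "(flip_mat n * mat_adjoint D * flip_mat n) $$ (p, q) = (flip_mat n * mat_adjoint D) $$ (p, n - 1 - q)"
    using assms by (intro index_mult_flip_mat) auto
  also have "\<dots> = mat_adjoint D $$ (n - 1 - p, n - 1 - q)"
    using assms by (intro index_flip_mat_mult) auto
  finally show ?thesis using assms by simp
qed

subsection \<open>Hermitian involutions intertwining a diagonal matrix with its adjoint\<close>

lemma per_hermitian_flip_commute: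
  assumes A: "A \<in> carrier_mat (2*n) (2*n)" and "per_hermitian n A"
  shows "A * flip_mat (2*n) = flip_mat (2*n) * mat_adjoint A"
proof -
  let ?F = "flip_mat (2*n)"
  have "mat_adjoint A * ?F = ?F * A"
    using assms mat_adjoint_mult[OF flip_mat_carrier A] unfolding per_hermitian_def by simp
  then have "?F * (mat_adjoint A * ?F) * ?F = ?F * (?F * A) * ?F" by simp
  then show ?thesis
    using A by (simp add: assoc_mult_mat[of _ "2*n" "2*n" _ "2*n" _ "2*n"]
        mult_left_inverse_cancel[of _ "2*n"] mult_carrier_mat[of _ "2*n" "2*n"])
qed

lemma unitary_conjugate_hermitian_involution:
  assumes U: "(U :: complex mat) \<in> carrier_mat n n" and UU: "mat_adjoint U * U = 1\<^sub>m n"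
    and J: "J \<in> carrier_mat n n" and JJ: "J * J = 1\<^sub>m n" and J_herm: "mat_adjoint J = J"
    and A: "A \<in> carrier_mat n n" and AJ: "A * J = J * mat_adjoint A"
    and L: "L = mat_adjoint U * A * U"
  defines "M \<equiv> mat_adjoint U * J * U"
  shows "mat_adjoint M = M" and "M * M = 1\<^sub>m n" and "L * M = M * mat_adjoint L"
proof -
  have UU': "U * mat_adjoint U = 1\<^sub>m n" by (rule unitary_right_inverse[OF U UU])
  note simps = assoc_mult_mat[of _ n n _ n _ n] mult_carrier_mat[of _ n n]
    mult_left_inverse_cancel[of _ n] mat_adjoint_mult[of _ n n _ n]
  show "mat_adjoint M = M" unfolding M_def using U J J_herm by (simp add: simps)
  show "M * M = 1\<^sub>m n" unfolding M_def using U J JJ UU UU' by (simp add: simps)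
  have "L * M = mat_adjoint U * (A * J) * U" unfolding L M_def using U J A UU' by (simp add: simps)
  also have "\<dots> = M * mat_adjoint L" unfolding AJ L M_def using U J A UU' by (simp add: simps)
  finally show "L * M = M * mat_adjoint L" .
qed

lemma diagonal_intertwining_entries:
  assumes L: "(L :: complex mat) \<in> carrier_mat n n" and dL: "diagonal_mat L"
    and M: "M \<in> carrier_mat n n" and LM: "L * M = M * mat_adjoint L"
    and i: "i < n" and j: "j < n"
  shows "L $$ (i, i) * M $$ (i, j) = M $$ (i, j) * cnj (L $$ (j, j))"
proof -
  have "L $$ (i, i) * M $$ (i, j) = (L * M) $$ (i, j)"
    by (rule index_diagonal_mult[OF L dL M i j, symmetric])
  also have "\<dots> = M $$ (i, j) * cnj (L $$ (j, j))"
    unfolding LM using assms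
    by (simp del: index_mult_mat(1) add: index_mult_diagonal[of "mat_adjoint L" n] diagonal_mat_adjoint)
  finally show ?thesis .
qed

lemma eigenvalue_unitary_diagonal:
  assumes U: "U \<in> carrier_mat n n" and UU: "mat_adjoint U * U = 1\<^sub>m n"
    and L: "(L :: complex mat) \<in> carrier_mat n n" and dL: "diagonal_mat L"
    and A: "A = U * L * mat_adjoint U" and i: "i < n"
  shows "eigenvalue A (L $$ (i, i))"
proof -
  have A_carrier: "A \<in> carrier_mat n n" using A U L by (simp add: mult_carrier_mat[of _ n n])
  have AU: "A * U = U * L"
    unfolding A using U L UU
    by (simp add: assoc_mult_mat[of _ n n _ n _ n] mult_left_inverse_cancel[of _ n] mult_carrier_mat[of _ n n])
  have "A *\<^sub>v col U i = L $$ (i, i) \<cdot>\<^sub>v col U i"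
  proof (rule eq_vecI)
    fix k assume "k < dim_vec (L $$ (i, i) \<cdot>\<^sub>v col U i)"
    then have k: "k < n" using U by simp
    have "(A *\<^sub>v col U i) $ k = (A * U) $$ (k, i)" using A_carrier U i k by simp
    also have "\<dots> = U $$ (k, i) * L $$ (i, i)" unfolding AU by (rule index_mult_diagonal[OF L dL U k i])
    finally show "(A *\<^sub>v col U i) $ k = (L $$ (i, i) \<cdot>\<^sub>v col U i) $ k" using U i k by simp
  qed (use A_carrier U in simp)
  moreover have "col U i \<noteq> 0\<^sub>v n"
  proof
    assume "col U i = 0\<^sub>v n"
    then have "(mat_adjoint U * U) $$ (i, i) = 0" using U i by simp
    then show False using UU i by simp
  qed
  moreover have "col U i \<in> carrier_vec n" using U by (simp add: carrier_vecI)
  ultimately show ?thesis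
    using A_carrier unfolding eigenvalue_def eigenvector_def by blast
qed

lemma diagonal_intertwining_same_half_plane:
  assumes L: "(L :: complex mat) \<in> carrier_mat n n" and dL: "diagonal_mat L"
    and M: "M \<in> carrier_mat n n" and LM: "L * M = M * mat_adjoint L"
    and i: "i < n" and j: "j < n"
    and nonreal: "Im (L $$ (i, i)) \<noteq> 0" "Im (L $$ (j, j)) \<noteq> 0"
    and same: "Im (L $$ (i, i)) > 0 \<longleftrightarrow> Im (L $$ (j, j)) > 0"
  shows "M $$ (i, j) = 0"
proof (rule ccontr)
  assume "M $$ (i, j) \<noteq> 0"
  then have "L $$ (i, i) = cnj (L $$ (j, j))"
    using diagonal_intertwining_entries[OF L dL M LM i j] by (simp add: mult.commute)
  then have "Im (L $$ (i, i)) = - Im (L $$ (j, j))" by simp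
  then show False using nonreal same by linarith
qed

text \<open>Sum the squared moduli of the entries of the block with rows in P and columns outside P,
  once by rows and once by columns.\<close>

lemma card_eq_of_unitary_off_diagonal_blocks:
  assumes M: "(M :: complex mat) \<in> carrier_mat N N"
    and MM': "M * mat_adjoint M = 1\<^sub>m N" and M'M: "mat_adjoint M * M = 1\<^sub>m N"
    and zero: "\<And>i j. i < N \<Longrightarrow> j < N \<Longrightarrow> P i = P j \<Longrightarrow> M $$ (i, j) = 0"
  shows "card {i. i < N \<and> P i} = card {i. i < N \<and> \<not> P i}"
proof -
  define S where "S = {i. i < N \<and> P i}"
  define S' where "S' = {i. i < N \<and> \<not> P i}"
  define q where "q i j = (cmod (M $$ (i, j)))\<^sup>2" for i j
  have fin: "finite S" "finite S'" and split: "{..<N} = S \<union> S'" "S \<inter> S' = {}"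
    unfolding S_def S'_def by auto
  have row: "(\<Sum>j\<in>S'. q i j) = 1" if "i \<in> S" for i
  proof -
    have "(\<Sum>j<N. q i j) = 1"
      using index_mult_mat_adjoint_diag[OF M, of i] MM' that unfolding q_def S_def
      by (simp del: of_real_power of_real_sum)
    moreover have "(\<Sum>j\<in>S. q i j) = 0" using that zero unfolding q_def S_def by auto
    ultimately show ?thesis unfolding split(1) sum.union_disjoint[OF fin split(2)] by simp
  qed
  have col: "(\<Sum>i\<in>S. q i j) = 1" if "j \<in> S'" for j
  proof -
    have "(\<Sum>i<N. q i j) = 1"
      using index_mat_adjoint_mult_diag[OF M, of j] M'M that unfolding q_def S'_def
      by (simp del: of_real_power of_real_sum)
    moreover have "(\<Sum>i\<in>S'. q i j) = 0" using that zero unfolding q_def S'_def by auto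
    ultimately show ?thesis unfolding split(1) sum.union_disjoint[OF fin split(2)] by simp
  qed
  have "real (card S) = (\<Sum>i\<in>S. \<Sum>j\<in>S'. q i j)" using row by simp
  also have "\<dots> = (\<Sum>j\<in>S'. \<Sum>i\<in>S. q i j)" by (rule sum.swap)
  also have "\<dots> = real (card S')" using col by simp
  finally show ?thesis unfolding S_def S'_def by simp
qed

lemma card_upper_half_plane_diagonal:
  assumes L: "(L :: complex mat) \<in> carrier_mat (2*n) (2*n)" and dL: "diagonal_mat L"
    and M: "M \<in> carrier_mat (2*n) (2*n)" and M_herm: "mat_adjoint M = M" and MM: "M * M = 1\<^sub>m (2*n)"
    and LM: "L * M = M * mat_adjoint L"
    and nonreal: "\<And>i. i < 2*n \<Longrightarrow> Im (L $$ (i, i)) \<noteq> 0"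
  shows "card {i. i < 2*n \<and> Im (L $$ (i, i)) > 0} = n"
proof -
  let ?S = "{i. i < 2*n \<and> Im (L $$ (i, i)) > 0}" and ?S' = "{i. i < 2*n \<and> \<not> Im (L $$ (i, i)) > 0}"
  have "card ?S = card ?S'"
    using M MM M_herm diagonal_intertwining_same_half_plane[OF L dL M LM] nonreal
    by (intro card_eq_of_unitary_off_diagonal_blocks[OF M]) auto
  moreover have "card ?S + card ?S' = card (?S \<union> ?S')" by (rule card_Un_disjoint[symmetric]) auto
  moreover have "?S \<union> ?S' = {..<2*n}" by auto
  ultimately show ?thesis by simp
qed

subsection \<open>A perplectic unitary frame\<close>

text \<open>Column j < n of the frame is the unit vector with index \<sigma> j, column 2n - 1 - j is its image
  under M.\<close>

locale flip_frame =
  fixes n :: nat and M :: "complex mat" and \<sigma> :: "nat \<Rightarrow> nat"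
  assumes M_carrier: "M \<in> carrier_mat (2*n) (2*n)"
    and M_hermitian: "mat_adjoint M = M"
    and M_involution: "M * M = 1\<^sub>m (2*n)"
    and \<sigma>_range: "j < n \<Longrightarrow> \<sigma> j < 2*n"
    and \<sigma>_inj: "inj_on \<sigma> {..<n}"
    and M_\<sigma>_zero: "j < n \<Longrightarrow> k < n \<Longrightarrow> M $$ (\<sigma> j, \<sigma> k) = 0"
begin

definition frame :: "complex mat" where
  "frame = mat (2*n) (2*n)
     (\<lambda>(i, j). if j < n then (if i = \<sigma> j then 1 else 0) else M $$ (i, \<sigma> (2*n - 1 - j)))"

lemma frame_carrier [simp]: "frame \<in> carrier_mat (2*n) (2*n)"
  and dim_frame [simp]: "dim_row frame = 2*n" "dim_col frame = 2*n"
  unfolding frame_def by simp_all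

lemma index_frame:
  "i < 2*n \<Longrightarrow> j < 2*n \<Longrightarrow>
    frame $$ (i, j) = (if j < n then (if i = \<sigma> j then 1 else 0) else M $$ (i, \<sigma> (2*n - 1 - j)))"
  unfolding frame_def by simp

lemma M_mult_frame: "M * frame = frame * flip_mat (2*n)"
proof (rule eq_matI)
  fix i k assume "i < dim_row (frame * flip_mat (2*n))" "k < dim_col (frame * flip_mat (2*n))"
  then have i: "i < 2*n" and k: "k < 2*n" by auto
  have "(M * frame) $$ (i, k) = (\<Sum>l<2*n. M $$ (i, l) * frame $$ (l, k))"
    using M_carrier i k by (intro index_mult_mat_sum) auto
  also have "\<dots> = frame $$ (i, 2*n - 1 - k)"
  proof (cases "k < n")
    case True
    have "(\<Sum>l<2*n. M $$ (i, l) * frame $$ (l, k)) = (\<Sum>l<2*n. if l = \<sigma> k then M $$ (i, l) else 0)"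
      using k True by (intro sum.cong) (auto simp: index_frame)
    then show ?thesis using True i k \<sigma>_range[OF True] by (simp add: index_frame)
  next
    case False
    then have k': "2*n - 1 - k < n" using k by auto
    have "(\<Sum>l<2*n. M $$ (i, l) * frame $$ (l, k)) = (M * M) $$ (i, \<sigma> (2*n - 1 - k))"
      using M_carrier i k False \<sigma>_range[OF k']
      by (subst index_mult_mat_sum[of _ "2*n" "2*n" _ "2*n"]) (auto simp: index_frame intro!: sum.cong)
    then show ?thesis using False i k k' \<sigma>_range[OF k'] by (simp add: M_involution index_frame)
  qed
  also have "\<dots> = (frame * flip_mat (2*n)) $$ (i, k)"
    using i k by (intro index_mult_flip_mat[symmetric]) auto
  finally show "(M * frame) $$ (i, k) = (frame * flip_mat (2*n)) $$ (i, k)" .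
qed (use M_carrier in auto)

lemma frame_adjoint_mult_first_rows:
  assumes j: "j < n" and k: "k < 2*n"
  shows "(mat_adjoint frame * frame) $$ (j, k) = 1\<^sub>m (2*n) $$ (j, k)"
proof -
  have "(mat_adjoint frame * frame) $$ (j, k) = (\<Sum>i<2*n. mat_adjoint frame $$ (j, i) * frame $$ (i, k))"
    using j k by (intro index_mult_mat_sum[of _ "2*n" "2*n"]) auto
  also have "\<dots> = (\<Sum>i<2*n. if i = \<sigma> j then frame $$ (i, k) else 0)"
    using j k by (intro sum.cong) (auto simp: index_frame)
  also have "\<dots> = frame $$ (\<sigma> j, k)" using \<sigma>_range[OF j] by simp
  also have "\<dots> = 1\<^sub>m (2*n) $$ (j, k)"
  proof (cases "k < n")
    case True
    then show ?thesis using j k \<sigma>_range[OF j] inj_onD[OF \<sigma>_inj, of j k] by (auto simp: index_frame)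
  next
    case False
    then have "2*n - 1 - k < n" using k by auto
    then show ?thesis using False j k \<sigma>_range[OF j] M_\<sigma>_zero[OF j] by (simp add: index_frame)
  qed
  finally show ?thesis .
qed

lemma frame_unitary: "mat_adjoint frame * frame = 1\<^sub>m (2*n)"
proof -
  let ?F = "flip_mat (2*n)" and ?G = "mat_adjoint frame * frame"
  note simps = assoc_mult_mat[of _ "2*n" "2*n" _ "2*n" _ "2*n"] mult_carrier_mat[of _ "2*n" "2*n"]
  have frame_M: "mat_adjoint frame * M = ?F * mat_adjoint frame"
    using arg_cong[OF M_mult_frame, of mat_adjoint] M_carrier M_hermitian
    by (simp add: mat_adjoint_mult[of _ "2*n" "2*n" _ "2*n"])
  \<comment> \<open>since M is an involution, the Gram matrix is invariant under reversing rows and columns\<close>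
  have "?G = (mat_adjoint frame * M) * (M * frame)"
    using M_carrier M_involution by (simp add: simps mult_left_inverse_cancel[of _ "2*n"])
  also have "\<dots> = ?F * ?G * ?F"
    unfolding frame_M M_mult_frame using M_carrier by (simp add: simps)
  finally have G_flip: "?G = ?F * ?G * ?F" .
  show ?thesis
  proof (rule eq_matI)
    fix j k assume "j < dim_row (1\<^sub>m (2*n) :: complex mat)" "k < dim_col (1\<^sub>m (2*n) :: complex mat)"
    then have j: "j < 2*n" and k: "k < 2*n" by auto
    show "?G $$ (j, k) = 1\<^sub>m (2*n) $$ (j, k)"
    proof (cases "j < n")
      case True
      then show ?thesis using frame_adjoint_mult_first_rows k by blast
    next
      case False
      have "?G $$ (j, k) = (?F * ?G) $$ (j, 2*n - 1 - k)"
        using j k by (subst G_flip) (intro index_mult_flip_mat[of _ "2*n"]; auto)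
      also have "\<dots> = ?G $$ (2*n - 1 - j, 2*n - 1 - k)"
        using j k by (intro index_flip_mat_mult) auto
      also have "\<dots> = 1\<^sub>m (2*n) $$ (j, k)"
        using frame_adjoint_mult_first_rows[of "2*n - 1 - j" "2*n - 1 - k"] False j k by auto
      finally show ?thesis .
    qed
  qed (auto)
qed

lemma diagonal_mult_frame:
  assumes L: "L \<in> carrier_mat (2*n) (2*n)" and dL: "diagonal_mat L"
    and LM: "L * M = M * mat_adjoint L"
  defines "D \<equiv> mat n n (\<lambda>(i, j). if i = j then L $$ (\<sigma> i, \<sigma> i) else 0)"
  shows "L * frame = frame * four_block_mat D (0\<^sub>m n n) (0\<^sub>m n n) (flip_mat n * mat_adjoint D * flip_mat n)"
    (is "_ = frame * ?B")
proof -
  have D: "D \<in> carrier_mat n n" unfolding D_def by simp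
  have B: "?B \<in> carrier_mat (2*n) (2*n)" using D by (simp add: mult_2 mult_carrier_mat[of _ n n])
  have index_D: "D $$ (i, j) = (if i = j then L $$ (\<sigma> i, \<sigma> i) else 0)" if "i < n" "j < n" for i j
    using that unfolding D_def by simp
  have index_B: "?B $$ (k, l) = (if k \<noteq> l then 0 else if k < n then L $$ (\<sigma> k, \<sigma> k)
      else cnj (L $$ (\<sigma> (2*n - 1 - k), \<sigma> (2*n - 1 - k))))"
    if k: "k < 2*n" and l: "l < 2*n" for k l
  proof (cases "k < n \<and> l < n")
    case True
    then show ?thesis using D by (simp add: index_D)
  next
    case False
    then consider "k < n" "\<not> l < n" | "\<not> k < n" "l < n" | "\<not> k < n" "\<not> l < n" by blast
    then show ?thesis
    proof cases
      case 3
      then have "?B $$ (k, l) = (flip_mat n * mat_adjoint D * flip_mat n) $$ (k - n, l - n)"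
        using D k l by simp
      also have "\<dots> = cnj (D $$ (2*n - 1 - l, 2*n - 1 - k))"
        using D k l 3 by (subst index_flip_adjoint_flip) (auto simp: numeral_2_eq_2 intro!: arg_cong[where f = cnj])
      finally show ?thesis using k l 3 by (auto simp: index_D)
    qed (use D k l in auto)
  qed
  have dB: "diagonal_mat ?B"
    unfolding diagonal_mat_def using B by (intro allI impI, subst index_B) auto
  show ?thesis
  proof (rule eq_matI)
    fix i k assume "i < dim_row (frame * ?B)" "k < dim_col (frame * ?B)"
    then have i: "i < 2*n" and k: "k < 2*n" using B by auto
    have "(L * frame) $$ (i, k) = L $$ (i, i) * frame $$ (i, k)"
      by (rule index_diagonal_mult[OF L dL frame_carrier i k])
    also have "\<dots> = frame $$ (i, k) * ?B $$ (k, k)"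
    proof (cases "k < n")
      case True
      then show ?thesis using i k by (subst index_B) (auto simp: index_frame)
    next
      case False
      then have "2*n - 1 - k < n" using k by auto
      then show ?thesis
        using diagonal_intertwining_entries[OF L dL M_carrier LM i \<sigma>_range] False i k
        by (subst index_B) (auto simp: index_frame)
    qed
    also have "\<dots> = (frame * ?B) $$ (i, k)"
      by (rule index_mult_diagonal[OF B dB frame_carrier i k, symmetric])
    finally show "(L * frame) $$ (i, k) = (frame * ?B) $$ (i, k)" .
  qed (use L B in auto)
qed

lemma perplectic_unitary_diagonalization:
  assumes U: "U \<in> carrier_mat (2*n) (2*n)" and UU: "mat_adjoint U * U = 1\<^sub>m (2*n)"
    and M_eq: "M = mat_adjoint U * flip_mat (2*n) * U"
    and L: "L \<in> carrier_mat (2*n) (2*n)" and dL: "diagonal_mat L" and LM: "L * M = M * mat_adjoint L"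
    and A: "A = U * L * mat_adjoint U"
  shows "\<exists>V D. V \<in> carrier_mat (2*n) (2*n) \<and> unitary_mat V \<and> perplectic n V \<and>
    D \<in> carrier_mat n n \<and> diagonal_mat D \<and>
    A = V * four_block_mat D (0\<^sub>m n n) (0\<^sub>m n n) (flip_mat n * mat_adjoint D * flip_mat n) * mat_adjoint V"
proof -
  define D where "D = mat n n (\<lambda>(i, j). if i = j then L $$ (\<sigma> i, \<sigma> i) else 0)"
  define B where "B = four_block_mat D (0\<^sub>m n n) (0\<^sub>m n n) (flip_mat n * mat_adjoint D * flip_mat n)"
  define V where "V = U * frame"
  have B: "B \<in> carrier_mat (2*n) (2*n)" unfolding B_def D_def by (simp add: mult_2 mult_carrier_mat[of _ n n])
  have LW: "L * frame = frame * B"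
    unfolding B_def D_def by (rule diagonal_mult_frame[OF L dL LM])
  have WW': "frame * mat_adjoint frame = 1\<^sub>m (2*n)"
    by (rule unitary_right_inverse[OF frame_carrier frame_unitary])
  have V: "V \<in> carrier_mat (2*n) (2*n)" unfolding V_def using U by simp
  have V_adj: "mat_adjoint V = mat_adjoint frame * mat_adjoint U"
    unfolding V_def by (rule mat_adjoint_mult[OF U frame_carrier])
  note simps = assoc_mult_mat[of _ "2*n" "2*n" _ "2*n" _ "2*n"] mult_carrier_mat[of _ "2*n" "2*n"]
    mult_left_inverse_cancel[of _ "2*n"]
  have "mat_adjoint V * V = 1\<^sub>m (2*n)"
    unfolding V_adj unfolding V_def using U UU frame_unitary by (simp add: simps)
  then have "unitary_mat V" unfolding unitary_mat_def using V by simp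
  moreover have "perplectic n V"
  proof -
    have "mat_adjoint V * flip_mat (2*n) * V = mat_adjoint frame * (mat_adjoint U * flip_mat (2*n) * U) * frame"
      unfolding V_adj unfolding V_def using U by (simp add: simps)
    also have "\<dots> = mat_adjoint frame * (M * frame)"
      unfolding M_eq[symmetric] using M_carrier by (simp add: simps)
    also have "\<dots> = flip_mat (2*n)"
      unfolding M_mult_frame using frame_unitary by (simp add: simps)
    finally show ?thesis unfolding perplectic_def .
  qed
  moreover have "A = V * B * mat_adjoint V"
  proof -
    have "V * B * mat_adjoint V = U * (L * frame * mat_adjoint frame) * mat_adjoint U"
      unfolding V_adj LW unfolding V_def using U L B by (simp add: simps)
    then show ?thesis unfolding A using U L WW' by (simp add: simps)
  qed
  moreover have "D \<in> carrier_mat n n" and "diagonal_mat D"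
    unfolding D_def diagonal_mat_def by auto
  ultimately show ?thesis using V unfolding B_def by blast
qed

end

theorem lemma2p6:
  fixes n :: nat and A :: "complex mat"
  assumes "A \<in> carrier_mat (2*n) (2*n)"
    and "normal_mat A"
    and "per_hermitian n A"
    and "\<And>ev. eigenvalue A ev \<Longrightarrow> Im ev \<noteq> 0"
  shows "\<exists>U D. U \<in> carrier_mat (2*n) (2*n) \<and> unitary_mat U \<and> perplectic n U \<and>
    D \<in> carrier_mat n n \<and> diagonal_mat D \<and>
    A = U * four_block_mat D (0\<^sub>m n n) (0\<^sub>m n n)
          (flip_mat n * mat_adjoint D * flip_mat n) * mat_adjoint U"
proof -
  obtain U L where U: "U \<in> carrier_mat (2*n) (2*n)" and UU: "mat_adjoint U * U = 1\<^sub>m (2*n)"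
    and L: "L \<in> carrier_mat (2*n) (2*n)" and dL: "diagonal_mat L" and AL: "A = U * L * mat_adjoint U"
    using normal_unitarily_diagonalizable[OF assms(1,2)] by blast
  have LA: "L = mat_adjoint U * A * U"
    unfolding AL using U L UU unitary_right_inverse[OF U UU]
    by (simp add: assoc_mult_mat[of _ "2*n" "2*n" _ "2*n" _ "2*n"] mult_carrier_mat[of _ "2*n" "2*n"]
        mult_left_inverse_cancel[of _ "2*n"])
  define M where "M = mat_adjoint U * flip_mat (2*n) * U"
  have M: "M \<in> carrier_mat (2*n) (2*n)" unfolding M_def using U by (simp add: mult_carrier_mat[of _ "2*n" "2*n"])
  have M_herm: "mat_adjoint M = M" and MM: "M * M = 1\<^sub>m (2*n)" and LM: "L * M = M * mat_adjoint L"
    using unitary_conjugate_hermitian_involution[OF U UU flip_mat_carrier _ _ assms(1)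
        per_hermitian_flip_commute[OF assms(1,3)] LA]
    unfolding M_def by auto
  have nonreal: "Im (L $$ (i, i)) \<noteq> 0" if "i < 2*n" for i
    using assms(4) eigenvalue_unitary_diagonal[OF U UU L dL AL that] .
  define S where "S = {i. i < 2*n \<and> Im (L $$ (i, i)) > 0}"
  obtain \<sigma> where \<sigma>: "bij_betw \<sigma> {..<n} S"
    using ex_bij_betw_nat_finite[of S] card_upper_half_plane_diagonal[OF L dL M M_herm MM LM nonreal]
    unfolding S_def by (auto simp: lessThan_atLeast0)
  interpret flip_frame n M \<sigma>
  proof
    show "j < n \<Longrightarrow> k < n \<Longrightarrow> M $$ (\<sigma> j, \<sigma> k) = 0" for j k
      using bij_betw_apply[OF \<sigma>] nonreal unfolding S_def
      by (intro diagonal_intertwining_same_half_plane[OF L dL M LM]) auto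
  qed (use M M_herm MM bij_betw_apply[OF \<sigma>] bij_betw_imp_inj_on[OF \<sigma>] in \<open>auto simp: S_def\<close>)
  show ?thesis by (rule perplectic_unitary_diagonalization[OF U UU M_def L dL LM AL])
qed

end
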